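(* Let $\kappa<0$, $m>0$, and let $L_{\kappa,m}$ be as in the context. Suppose $\delta\in(0,1)$ and $0<\rho_1<\rho_2<\min\{R_{|\kappa|},2m\delta/3\}$. Then with $\beta=\sqrt{1-\delta^2}$ and $A=\sin_\kappa(\rho_2)/\rho_2$, \[\frac{L_{\kappa,m}(\rho_2)}{L_{\kappa,m}(\rho_1)}\ge\frac12\left[\left(\frac{\rho_2}{A\rho_1}\right)^{\beta m}-\left(\frac{\rho_2}{A\rho_1}\right)^{-\beta m}\right].\]
   Context: For $\kappa<0$: $\sin_\kappa(\rho)=\sinh(\sqrt{-\kappa}\rho)/\sqrt{-\kappa}$, $\cos_\kappa=(\sin_\kappa)'$, and $R_{|\kappa|}=\pi/(2\sqrt{|\kappa|})$. $L_{\kappa,m}$ is a solution of \[\sin_\kappa^2(\rho)L''(\rho)+\sin_\kappa(\rho)\cos_\kappa(\rho)L'(\rho)+(\sin_\kappa^2(\rho)-m^2)L(\rho)=0\] that is well defined (regular) at $\rho=0$ and positive on some interval $(0,\varepsilon)$. *)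

theory Defs
  imports "HOL-Analysis.Analysis"
begin

definition sin_k :: "real \<Rightarrow> real \<Rightarrow> real" where
  "sin_k \<kappa> \<rho> = sinh (sqrt (-\<kappa>) * \<rho>) / sqrt (-\<kappa>)"

definition cos_k :: "real \<Rightarrow> real \<Rightarrow> real" where
  "cos_k \<kappa> \<rho> = cosh (sqrt (-\<kappa>) * \<rho>)"

definition R_rad :: "real \<Rightarrow> real" where
  "R_rad c = pi / (2 * sqrt c)"

text \<open>L is an admissible L_{kappa,m}: a twice differentiable solution of the ODE on
  (0, R_{|kappa|}), regular at 0 (it has a finite limit as rho tends to 0 from the right),
  and positive on some interval (0, eps).\<close>
definition is_L :: "real \<Rightarrow> real \<Rightarrow> (real \<Rightarrow> real) \<Rightarrow> bool" where
  "is_L \<kappa> m L \<longleftrightarrow>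
     (\<exists>L' L''. \<forall>\<rho>\<in>{0<..<R_rad \<bar>\<kappa>\<bar>}.
        (L has_real_derivative L' \<rho>) (at \<rho>) \<and>
        (L' has_real_derivative L'' \<rho>) (at \<rho>) \<and>
        (sin_k \<kappa> \<rho>)\<^sup>2 * L'' \<rho> + sin_k \<kappa> \<rho> * cos_k \<kappa> \<rho> * L' \<rho>
          + ((sin_k \<kappa> \<rho>)\<^sup>2 - m\<^sup>2) * L \<rho> = 0) \<and>
     (\<exists>l. (L \<longlongrightarrow> l) (at_right 0)) \<and>
     (\<exists>\<epsilon>>0. \<forall>\<rho>\<in>{0<..<\<epsilon>}. L \<rho> > 0)"

end

theory Submission
  imports Defs
begin

(*
  In the variable t = ln tanh (sqrt (-\<kappa>) \<rho> / 2), for which dt/d\<rho> = 1 / sin_k \<rho>, the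
  equation becomes L_tt = (m^2 - sin_k^2) L.  Since sinh x / x increases and sinh (pi/2) < 3 pi/4,
  sin_k \<rho> \<le> 3\<rho>/2 up to R_|\<kappa>|, so for \<rho> < 2m\<delta>/3 the coefficient is at least k^2 = (\<beta> m)^2.
  Because L is bounded at 0, L sin_k L' is nonnegative (a negative value would persist towards 0
  and make L grow like -ln \<rho>); hence L > 0 and L' \<ge> 0, and Sturm comparison with cosh (k t)
  gives L \<rho>2 / L \<rho>1 \<ge> cosh (k (t2 - t1)).  Finally tanh (x/2) \<le> x/2 and
  x^2 \<le> 2 sinh x tanh (x/2) give exp (t2 - t1) \<ge> \<rho>2 / (A \<rho>1), and cosh \<ge> sinh.
*)

lemma sinh_le_mult_cosh:
  fixes x :: real
  assumes "0 \<le> x"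
  shows "sinh x \<le> x * cosh x"
proof -
  have "(\<lambda>z. z * cosh z - sinh z) 0 \<le> (\<lambda>z. z * cosh z - sinh z) x"
  proof (rule DERIV_nonneg_imp_nondecreasing[OF assms])
    fix z :: real
    assume "0 \<le> z"
    moreover have "((\<lambda>z. z * cosh z - sinh z) has_real_derivative z * sinh z) (at z)"
      by (auto intro!: derivative_eq_intros)
    ultimately show "\<exists>y. ((\<lambda>z. z * cosh z - sinh z) has_real_derivative y) (at z) \<and> 0 \<le> y"
      by auto
  qed
  then show ?thesis by simp
qed

lemma tanh_le_self:
  fixes x :: real
  assumes "0 \<le> x"
  shows "tanh x \<le> x"
  using sinh_le_mult_cosh[OF assms] by (simp add: tanh_def divide_le_eq)

lemma sq_le_two_sinh_mult_tanh_half: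
  fixes y :: real
  shows "y\<^sup>2 \<le> 2 * sinh y * tanh (y / 2)"
proof -
  have "2 * sinh y * tanh (y / 2) = (2 * sinh (y / 2))\<^sup>2"
    using sinh_double[of "y / 2"] by (simp add: tanh_def power2_eq_square)
  moreover have "\<bar>y / 2\<bar> \<le> \<bar>sinh (y / 2)\<bar>"
    using real_le_abs_sinh[of "y / 2"] by (simp add: sinh_field_def exp_minus)
  then have "(y / 2)\<^sup>2 \<le> (sinh (y / 2))\<^sup>2"
    by (metis abs_ge_zero power2_abs power_mono)
  ultimately show ?thesis by (simp add: power_divide mult.assoc)
qed

lemma sinh_div_self_mono:
  fixes x y :: real
  assumes "0 < x" "x \<le> y"
  shows "sinh x / x \<le> sinh y / y"
proof (rule DERIV_nonneg_imp_nondecreasing[OF assms(2)])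
  fix z
  assume "x \<le> z"
  with assms have "0 < z" by simp
  have "((\<lambda>z. sinh z / z) has_real_derivative (z * cosh z - sinh z) / z\<^sup>2) (at z)"
    using \<open>0 < z\<close> by (auto intro!: derivative_eq_intros simp: power2_eq_square)
  moreover have "0 \<le> (z * cosh z - sinh z) / z\<^sup>2"
    using sinh_le_mult_cosh[of z] \<open>0 < z\<close> by simp
  ultimately show "\<exists>d. ((\<lambda>z. sinh z / z) has_real_derivative d) (at z) \<and> 0 \<le> d"
    by blast
qed

lemma exp_1_5708_le: "exp (1.5708::real) \<le> 4.816"
proof -
  define x :: real where "x = 1.5708"
  obtain t where "\<bar>t\<bar> \<le> \<bar>x\<bar>" and exp_x: "exp x = (\<Sum>m<8. x ^ m / fact m) + exp t / fact 8 * x ^ 8"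
    using Maclaurin_exp_le by blast
  from \<open>\<bar>t\<bar> \<le> \<bar>x\<bar>\<close> have "exp t \<le> exp x"
    by (simp add: x_def abs_le_iff)
  have "x ^ 8 \<le> (1.6::real) ^ 8"
    unfolding x_def by (rule power_mono) auto
  also have "\<dots> \<le> 44"
    by (simp add: power_divide)
  finally have "x ^ 8 / fact 8 \<le> 0.0011"
    by (simp add: fact_numeral)
  then have "exp t / fact 8 * x ^ 8 \<le> exp x * 0.0011"
    using \<open>exp t \<le> exp x\<close> mult_mono[of "exp t" "exp x" "x ^ 8 / fact 8" "0.0011"]
    by (simp add: x_def)
  moreover have "(\<Sum>m<8. x ^ m / fact m) \<le> 4.81"
    by (simp add: x_def numeral_eq_Suc fact_numeral)
  ultimately show ?thesis
    using exp_x unfolding x_def by simp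
qed

lemma sinh_pi_half_le: "sinh (pi / 2) \<le> 3 * pi / 4"
proof -
  have "sinh (pi / 2) \<le> sinh (1.5708::real)"
    using pi_approx by simp
  also have "\<dots> = (exp 1.5708 - inverse (exp (1.5708::real))) / 2"
    by (simp add: sinh_field_def exp_minus)
  also have "\<dots> \<le> (4.816 - inverse 4.816) / 2"
    using exp_1_5708_le le_imp_inverse_le[OF exp_1_5708_le] by simp
  also have "\<dots> \<le> 3 * pi / 4"
    using pi_approx by simp
  finally show ?thesis .
qed

lemma sinh_le_three_halves_self:
  fixes x :: real
  assumes "0 < x" "x \<le> pi / 2"
  shows "sinh x \<le> 3 / 2 * x"
proof -
  have "sinh x / x \<le> sinh (pi / 2) / (pi / 2)"
    by (rule sinh_div_self_mono[OF assms])
  also have "\<dots> \<le> 3 / 2"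
    using sinh_pi_half_le by (simp add: divide_le_eq)
  finally show ?thesis
    using \<open>0 < x\<close> by (simp add: divide_le_eq mult.commute)
qed

lemma tanh_half_ratio_ge:
  fixes x y :: real
  assumes "0 < x" "0 < y"
  shows "y\<^sup>2 / (x * sinh y) \<le> tanh (y / 2) / tanh (x / 2)"
proof -
  have "y\<^sup>2 / (x * sinh y) \<le> 2 * sinh y * tanh (y / 2) / (x * sinh y)"
    using sq_le_two_sinh_mult_tanh_half[of y] assms by (intro divide_right_mono) auto
  also have "\<dots> = tanh (y / 2) / (x / 2)"
    using assms by simp
  also have "\<dots> \<le> tanh (y / 2) / tanh (x / 2)"
    using tanh_le_self[of "x / 2"] assms by (intro divide_left_mono) auto
  finally show ?thesis .
qed

lemma filterlim_at_top_at_right_0_if_deriv_le: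
  fixes f f' :: "real \<Rightarrow> real" and c :: real
  assumes "0 < c"
    and "\<forall>\<^sub>F x in at_right 0. (f has_real_derivative f' x) (at x) \<and> f' x \<le> - c / x"
  shows "filterlim f at_top (at_right 0)"
proof -
  obtain b where "0 < b" and b: "\<And>x. 0 < x \<Longrightarrow> x < b \<Longrightarrow>
      (f has_real_derivative f' x) (at x) \<and> f' x \<le> - c / x"
    using assms(2) unfolding eventually_at_right_field by auto
  define r where "r = b / 2"
  have "0 < r" "r < b" using \<open>0 < b\<close> by (auto simp: r_def)
  have lower: "f r + c * ln r - c * ln x \<le> f x" if "0 < x" "x \<le> r" for x
  proof -
    have "(\<lambda>z. f z + c * ln z) r \<le> (\<lambda>z. f z + c * ln z) x"
    proof (rule DERIV_nonpos_imp_nonincreasing[OF \<open>x \<le> r\<close>])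
      fix z
      assume "x \<le> z" "z \<le> r"
      with that \<open>r < b\<close> have "0 < z" "z < b" by auto
      then have "((\<lambda>z. f z + c * ln z) has_real_derivative f' z + c / z) (at z)"
        using b by (auto intro!: derivative_eq_intros)
      moreover have "f' z + c / z \<le> 0"
        using b[OF \<open>0 < z\<close> \<open>z < b\<close>] by simp
      ultimately show "\<exists>y. ((\<lambda>z. f z + c * ln z) has_real_derivative y) (at z) \<and> y \<le> 0"
        by blast
    qed
    then show ?thesis by simp
  qed
  have "filterlim (\<lambda>x. f r + c * ln r + c * - ln x) at_top (at_right 0)"
    using \<open>0 < c\<close> ln_at_0
    by (intro filterlim_tendsto_add_at_top filterlim_tendsto_pos_mult_at_top)
       (auto simp: filterlim_uminus_at_top)
  moreover have "\<forall>\<^sub>F x in at_right 0. f r + c * ln r + c * - ln x \<le> f x"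
    using \<open>0 < r\<close> lower unfolding eventually_at_right_field by force
  ultimately show ?thesis
    by (rule filterlim_at_top_mono)
qed

locale radial_ode =
  fixes S L L' q :: "real \<Rightarrow> real" and R :: real
  assumes S_pos: "\<And>x. 0 < x \<Longrightarrow> x \<le> R \<Longrightarrow> 0 < S x"
    and L_deriv: "\<And>x. 0 < x \<Longrightarrow> x \<le> R \<Longrightarrow> (L has_real_derivative L' x) (at x)"
    and flux_deriv: "\<And>x. 0 < x \<Longrightarrow> x \<le> R \<Longrightarrow>
      ((\<lambda>y. S y * L' y) has_real_derivative q x * L x / S x) (at x)"
begin

text \<open>
  The left-hand side is the Wronskian, with respect to the variable T, of L and the comparison
  solution cosh (k (T x - T r)) of the equation with q replaced by k^2.
\<close>
lemma wronskian_mono: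
  fixes k :: real and T :: "real \<Rightarrow> real"
  assumes "0 < r" "r \<le> x" "x \<le> R"
    and q_ge: "\<And>x. r \<le> x \<Longrightarrow> x \<le> R \<Longrightarrow> k\<^sup>2 \<le> q x"
    and T_deriv: "\<And>x. r \<le> x \<Longrightarrow> x \<le> R \<Longrightarrow> (T has_real_derivative 1 / S x) (at x)"
    and L_pos: "\<And>x. r \<le> x \<Longrightarrow> x \<le> R \<Longrightarrow> 0 < L x"
  shows "S r * L' r \<le> S x * L' x * cosh (k * (T x - T r)) - L x * k * sinh (k * (T x - T r))"
proof -
  define W where "W x = S x * L' x * cosh (k * (T x - T r)) - L x * k * sinh (k * (T x - T r))" for x
  have "W r \<le> W x"
  proof (rule DERIV_nonneg_imp_nondecreasing[OF \<open>r \<le> x\<close>])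
    fix z
    assume "r \<le> z" "z \<le> x"
    with assms have z: "r \<le> z" "z \<le> R" and "0 < z" by auto
    have "(W has_real_derivative
        (S z * L' z * (sinh (k * (T z - T r)) * (k * (1 / S z)))
          + q z * L z / S z * cosh (k * (T z - T r)))
        - (L z * (k * (cosh (k * (T z - T r)) * (k * (1 / S z))))
          + L' z * k * sinh (k * (T z - T r)))) (at z)" (is "(W has_real_derivative ?W') _")
      unfolding W_def
      by (rule DERIV_diff DERIV_mult' flux_deriv L_deriv derivative_eq_intros T_deriv refl
          | use z \<open>0 < z\<close> in simp)+
    moreover have "?W' = (q z - k\<^sup>2) * L z * cosh (k * (T z - T r)) / S z"
      using S_pos[OF \<open>0 < z\<close> z(2)] by (simp add: field_simps power2_eq_square)
    moreover have "0 \<le> (q z - k\<^sup>2) * L z * cosh (k * (T z - T r)) / S z"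
      using q_ge[OF z] L_pos[OF z] S_pos[OF \<open>0 < z\<close> z(2)] by simp
    ultimately show "\<exists>d. (W has_real_derivative d) (at z) \<and> 0 \<le> d"
      by auto
  qed
  then show ?thesis
    by (simp add: W_def)
qed

lemma cosh_comparison:
  fixes k :: real and T :: "real \<Rightarrow> real"
  assumes "0 < r" "r \<le> R"
    and q_ge: "\<And>x. r \<le> x \<Longrightarrow> x \<le> R \<Longrightarrow> k\<^sup>2 \<le> q x"
    and T_deriv: "\<And>x. r \<le> x \<Longrightarrow> x \<le> R \<Longrightarrow> (T has_real_derivative 1 / S x) (at x)"
    and L_pos: "\<And>x. r \<le> x \<Longrightarrow> x \<le> R \<Longrightarrow> 0 < L x"
    and "0 \<le> L' r"
  shows "L r * cosh (k * (T R - T r)) \<le> L R"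
proof -
  define C where "C x = cosh (k * (T x - T r))" for x
  have "L r / C r \<le> L R / C R"
  proof (rule DERIV_nonneg_imp_nondecreasing[OF \<open>r \<le> R\<close>])
    fix z
    assume z: "r \<le> z" "z \<le> R"
    with \<open>0 < r\<close> have "0 < z" by linarith
    define W where "W = S z * L' z * C z - L z * k * sinh (k * (T z - T r))"
    have "((\<lambda>x. L x / C x) has_real_derivative
        (L' z * C z - L z * (sinh (k * (T z - T r)) * (k * (1 / S z)))) / (C z * C z)) (at z)"
      (is "(_ has_real_derivative ?D) _")
      unfolding C_def
      by (rule DERIV_divide L_deriv derivative_eq_intros T_deriv refl | use z \<open>0 < z\<close> in simp)+
    moreover have "?D = W / (S z * (C z)\<^sup>2)"
      using S_pos[OF \<open>0 < z\<close> z(2)] by (simp add: W_def C_def field_simps power2_eq_square)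
    moreover have "0 \<le> W / (S z * (C z)\<^sup>2)"
    proof (rule divide_nonneg_pos)
      have "0 \<le> S r * L' r"
        using \<open>0 \<le> L' r\<close> S_pos[OF \<open>0 < r\<close> \<open>r \<le> R\<close>] by simp
      then show "0 \<le> W"
        using wronskian_mono[OF \<open>0 < r\<close> z q_ge T_deriv L_pos] unfolding W_def C_def by linarith
      show "0 < S z * (C z)\<^sup>2"
        using S_pos[OF \<open>0 < z\<close> z(2)] by (simp add: C_def)
    qed
    ultimately show "\<exists>d. ((\<lambda>x. L x / C x) has_real_derivative d) (at z) \<and> 0 \<le> d"
      by auto
  qed
  then show ?thesis
    by (simp add: C_def le_divide_eq)
qed

end

locale regular_radial_ode = radial_ode +
  fixes b l :: real
  assumes q_nonneg: "\<And>x. 0 < x \<Longrightarrow> x \<le> R \<Longrightarrow> 0 \<le> q x"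
    and S_le: "\<And>x. 0 < x \<Longrightarrow> x \<le> R \<Longrightarrow> S x \<le> b * x"
    and L_lim: "(L \<longlongrightarrow> l) (at_right 0)"
    and L_pos_near_0: "\<forall>\<^sub>F x in at_right 0. 0 < L x"
begin

lemma L_mult_flux_mono:
  assumes "0 < x" "x \<le> y" "y \<le> R"
  shows "L x * (S x * L' x) \<le> L y * (S y * L' y)"
proof (rule DERIV_nonneg_imp_nondecreasing[OF \<open>x \<le> y\<close>])
  fix z
  assume "x \<le> z" "z \<le> y"
  with assms have z: "0 < z" "z \<le> R" by auto
  have "((\<lambda>z. L z * (S z * L' z)) has_real_derivative
      L z * (q z * L z / S z) + L' z * (S z * L' z)) (at z)"
    using z by (intro DERIV_mult' L_deriv flux_deriv)
  moreover have "0 \<le> L z * (q z * L z / S z) + L' z * (S z * L' z)"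
  proof -
    have "L z * (q z * L z / S z) = q z * (L z)\<^sup>2 / S z"
      and "L' z * (S z * L' z) = S z * (L' z)\<^sup>2"
      by (simp_all add: power2_eq_square)
    moreover have "0 \<le> q z * (L z)\<^sup>2 / S z" and "0 \<le> S z * (L' z)\<^sup>2"
      using S_pos[OF z] q_nonneg[OF z] by simp_all
    ultimately show ?thesis by linarith
  qed
  ultimately show "\<exists>d. ((\<lambda>z. L z * (S z * L' z)) has_real_derivative d) (at z) \<and> 0 \<le> d"
    by blast
qed

lemma b_pos:
  assumes "0 < x" "x \<le> R"
  shows "0 < b"
proof -
  have "0 < b * x"
    using S_pos[OF assms] S_le[OF assms] by linarith
  then show ?thesis
    using \<open>0 < x\<close> by (simp add: zero_less_mult_iff)
qed

lemma L_deriv_le_neg_inverse: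
  assumes "L x * (S x * L' x) \<le> - c" "0 < c" "x \<le> R"
    and "0 < y" "y < x" "0 < L y" "L y < M"
  shows "L' y \<le> - (c / (M * b)) / y"
proof -
  have y: "0 < y" "y \<le> R" using assms by auto
  have "L y * (S y * L' y) \<le> - c"
    using L_mult_flux_mono[OF y(1), of x] assms by simp
  then have "S y * L' y \<le> - c / L y"
    using \<open>0 < L y\<close> by (subst pos_le_divide_eq) (simp_all add: ac_simps)
  also have "\<dots> \<le> - c / M"
    using assms by (simp add: frac_le)
  finally have "L' y \<le> - c / M / S y"
    using S_pos[OF y] by (subst pos_le_divide_eq) (simp_all add: ac_simps)
  also have "\<dots> \<le> - c / M / (b * y)"
    using S_pos[OF y] S_le[OF y] assms b_pos[OF y]
    by (intro divide_left_mono_neg) (auto simp: zero_less_mult_iff)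
  finally show ?thesis by (simp add: ac_simps)
qed

lemma L_mult_flux_nonneg:
  assumes "0 < x" "x \<le> R"
  shows "0 \<le> L x * (S x * L' x)"
proof (rule ccontr)
  define c where "c = - (L x * (S x * L' x))"
  assume "\<not> ?thesis"
  then have "0 < c" by (simp add: c_def)
  have "\<forall>\<^sub>F y in at_right 0. y < x"
    using \<open>0 < x\<close> unfolding eventually_at_right_field by blast
  then have near_0: "\<forall>\<^sub>F y in at_right 0. 0 < y \<and> y < x \<and> 0 < L y \<and> L y < l + 1"
    using eventually_at_right_less[of "0::real"] L_pos_near_0
    by (intro eventually_conj order_tendstoD(2)[OF L_lim]) auto
  have "0 < l + 1"
  proof -
    have "\<forall>\<^sub>F y in at_right (0::real). 0 < l + 1"
      using near_0 by eventually_elim auto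
    then show ?thesis by simp
  qed
  have "filterlim L at_top (at_right 0)"
  proof (rule filterlim_at_top_at_right_0_if_deriv_le)
    show "0 < c / ((l + 1) * b)"
      using \<open>0 < c\<close> b_pos[OF assms] \<open>0 < l + 1\<close> by simp
    show "\<forall>\<^sub>F y in at_right 0. (L has_real_derivative L' y) (at y) \<and>
        L' y \<le> - (c / ((l + 1) * b)) / y"
      using near_0
      by eventually_elim
        (use L_deriv_le_neg_inverse[of x c] L_deriv \<open>0 < c\<close> \<open>x \<le> R\<close> in \<open>auto simp: c_def\<close>)
  qed
  then show False
    using L_lim by (auto dest: filterlim_at_top_imp_at_infinity not_tendsto_and_filterlim_at_infinity[rotated])
qed

lemma L_pos:
  assumes "0 < x" "x \<le> R"
  shows "0 < L x"
proof (rule ccontr)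
  assume "\<not> 0 < L x"
  obtain y where y: "0 < y" "y < x" "0 < L y"
  proof -
    obtain b' where "0 < b'" and "\<And>y. 0 < y \<Longrightarrow> y < b' \<Longrightarrow> 0 < L y"
      using L_pos_near_0 unfolding eventually_at_right_field by auto
    then show ?thesis
      using that[of "min b' x / 2"] \<open>0 < x\<close> by simp
  qed
  have L_sq_mono: "(L y)\<^sup>2 \<le> (L z)\<^sup>2" if "y \<le> z" "z \<le> x" for z
  proof (rule DERIV_nonneg_imp_nondecreasing[OF \<open>y \<le> z\<close>])
    fix t
    assume "y \<le> t" "t \<le> z"
    with y that \<open>x \<le> R\<close> have t: "0 < t" "t \<le> R" by auto
    have "((\<lambda>t. (L t)\<^sup>2) has_real_derivative 2 * (L t * L' t)) (at t)"
      using t by (auto intro!: derivative_eq_intros L_deriv)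
    moreover have "0 \<le> L t * (S t * L' t) / S t"
      using L_mult_flux_nonneg[OF t] S_pos[OF t]
      by (rule divide_nonneg_pos)
    then have "0 \<le> 2 * (L t * L' t)"
      using S_pos[OF t] by simp
    ultimately show "\<exists>d. ((\<lambda>t. (L t)\<^sup>2) has_real_derivative d) (at t) \<and> 0 \<le> d"
      by blast
  qed
  have "\<forall>t. y \<le> t \<and> t \<le> x \<longrightarrow> isCont L t"
    using y \<open>x \<le> R\<close> by (auto intro!: DERIV_isCont[OF L_deriv])
  then obtain z where "y \<le> z" "z \<le> x" "L z = 0"
    using IVT2[of L x 0 y] \<open>\<not> 0 < L x\<close> y by auto
  then show False
    using L_sq_mono[of z] \<open>0 < L y\<close> by simp
qed

lemma L'_nonneg:
  assumes "0 < x" "x \<le> R"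
  shows "0 \<le> L' x"
  using L_mult_flux_nonneg[OF assms] L_pos[OF assms] S_pos[OF assms]
  by (simp add: zero_le_mult_iff)

end

lemma sin_k_pos: "\<kappa> < 0 \<Longrightarrow> 0 < x \<Longrightarrow> 0 < sin_k \<kappa> x"
  by (simp add: sin_k_def)

lemma sin_k_has_real_derivative:
  assumes "\<kappa> < 0"
  shows "(sin_k \<kappa> has_real_derivative cos_k \<kappa> x) (at x)"
proof -
  have "((\<lambda>x. sinh (sqrt (- \<kappa>) * x) / sqrt (- \<kappa>)) has_real_derivative
      cosh (sqrt (- \<kappa>) * x) * sqrt (- \<kappa>) / sqrt (- \<kappa>)) (at x)"
    by (intro DERIV_cdivide) (auto intro!: derivative_eq_intros)
  then show ?thesis
    using assms by (simp add: sin_k_def[abs_def] cos_k_def)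
qed

lemma sin_k_le_three_halves:
  assumes "\<kappa> < 0" "0 < x" "x \<le> R_rad \<bar>\<kappa>\<bar>"
  shows "sin_k \<kappa> x \<le> 3 / 2 * x"
proof -
  define a where "a = sqrt (- \<kappa>)"
  have "0 < a" and "a * x \<le> pi / 2"
    using assms by (simp_all add: a_def R_rad_def field_simps)
  have "sin_k \<kappa> x = sinh (a * x) / a"
    by (simp add: sin_k_def a_def)
  also have "\<dots> \<le> 3 / 2 * (a * x) / a"
    using \<open>0 < a\<close> \<open>a * x \<le> pi / 2\<close> \<open>0 < x\<close>
    by (intro divide_right_mono sinh_le_three_halves_self) auto
  also have "\<dots> = 3 / 2 * x"
    using \<open>0 < a\<close> by simp
  finally show ?thesis .
qed

lemma ln_tanh_half_has_real_derivative:
  assumes "\<kappa> < 0" "0 < x"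
  shows "((\<lambda>x. ln (tanh (sqrt (- \<kappa>) * x / 2))) has_real_derivative 1 / sin_k \<kappa> x) (at x)"
proof -
  define a where "a = sqrt (- \<kappa>)"
  define u where "u = a * x / 2"
  have "0 < a" "0 < u"
    using assms by (auto simp: a_def u_def)
  have "((\<lambda>x. ln (tanh (a * x / 2))) has_real_derivative
      (1 - (tanh u)\<^sup>2) * (a / 2) / tanh u) (at x)"
    using \<open>0 < u\<close> unfolding u_def by (auto intro!: derivative_eq_intros)
  moreover have "(1 - (tanh u)\<^sup>2) * (a / 2) / tanh u = 1 / sin_k \<kappa> x"
  proof -
    have "1 - (tanh u)\<^sup>2 = ((cosh u)\<^sup>2 - (sinh u)\<^sup>2) / (cosh u)\<^sup>2"
      by (simp add: tanh_def power_divide diff_divide_distrib)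
    also have "\<dots> = 1 / (cosh u)\<^sup>2"
      by (simp only: hyperbolic_pythagoras)
    finally have tanh_sq: "1 - (tanh u)\<^sup>2 = 1 / (cosh u)\<^sup>2" .
    have "(1 - (tanh u)\<^sup>2) * (a / 2) / tanh u = (a / 2) / ((cosh u)\<^sup>2 * tanh u)"
      by (simp add: tanh_sq)
    also have "\<dots> = a / (2 * sinh u * cosh u)"
      using \<open>0 < u\<close> by (simp add: tanh_def power2_eq_square)
    also have "2 * sinh u * cosh u = a * sin_k \<kappa> x"
      using sinh_double[of u] \<open>0 < a\<close> by (simp add: sin_k_def a_def u_def)
    finally show ?thesis
      using \<open>0 < a\<close> by simp
  qed
  ultimately show ?thesis
    by (simp add: a_def)
qed

lemma radial_ode_sin_k:
  assumes "\<kappa> < 0" "R < R_rad \<bar>\<kappa>\<bar>"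
    and ode: "\<forall>\<rho>\<in>{0<..<R_rad \<bar>\<kappa>\<bar>}.
        (L has_real_derivative L' \<rho>) (at \<rho>) \<and>
        (L' has_real_derivative L'' \<rho>) (at \<rho>) \<and>
        (sin_k \<kappa> \<rho>)\<^sup>2 * L'' \<rho> + sin_k \<kappa> \<rho> * cos_k \<kappa> \<rho> * L' \<rho>
          + ((sin_k \<kappa> \<rho>)\<^sup>2 - m\<^sup>2) * L \<rho> = 0"
  shows "radial_ode (sin_k \<kappa>) L L' (\<lambda>x. m\<^sup>2 - (sin_k \<kappa> x)\<^sup>2) R"
proof unfold_locales
  fix x :: real
  assume "0 < x" "x \<le> R"
  then have "x \<in> {0<..<R_rad \<bar>\<kappa>\<bar>}"
    using assms(2) by simp
  then have L_deriv: "(L has_real_derivative L' x) (at x)"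
    and L'_deriv: "(L' has_real_derivative L'' x) (at x)"
    and eq: "(sin_k \<kappa> x)\<^sup>2 * L'' x + sin_k \<kappa> x * cos_k \<kappa> x * L' x
      + ((sin_k \<kappa> x)\<^sup>2 - m\<^sup>2) * L x = 0"
    using ode by auto
  show S_pos: "0 < sin_k \<kappa> x"
    using sin_k_pos[OF \<open>\<kappa> < 0\<close> \<open>0 < x\<close>] .
  show "(L has_real_derivative L' x) (at x)"
    by (fact L_deriv)
  have "((\<lambda>y. sin_k \<kappa> y * L' y) has_real_derivative
      sin_k \<kappa> x * L'' x + cos_k \<kappa> x * L' x) (at x)"
    by (rule DERIV_mult'[OF sin_k_has_real_derivative[OF \<open>\<kappa> < 0\<close>] L'_deriv])
  moreover have "sin_k \<kappa> x * L'' x + cos_k \<kappa> x * L' x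
      = (m\<^sup>2 - (sin_k \<kappa> x)\<^sup>2) * L x / sin_k \<kappa> x"
    using eq S_pos by (simp add: field_simps power2_eq_square)
  ultimately show "((\<lambda>y. sin_k \<kappa> y * L' y) has_real_derivative
      (m\<^sup>2 - (sin_k \<kappa> x)\<^sup>2) * L x / sin_k \<kappa> x) (at x)"
    by simp
qed

lemma is_L_ge_cosh:
  fixes k :: real
  assumes "\<kappa> < 0" "is_L \<kappa> m L" "0 < \<rho>1" "\<rho>1 < \<rho>2" "\<rho>2 < R_rad \<bar>\<kappa>\<bar>"
    and gap: "\<And>x. 0 < x \<Longrightarrow> x \<le> \<rho>2 \<Longrightarrow> k\<^sup>2 \<le> m\<^sup>2 - (sin_k \<kappa> x)\<^sup>2"
  shows "0 < L \<rho>1"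
    and "L \<rho>1 * cosh (k * (ln (tanh (sqrt (- \<kappa>) * \<rho>2 / 2)) - ln (tanh (sqrt (- \<kappa>) * \<rho>1 / 2))))
      \<le> L \<rho>2"
proof -
  obtain L' L'' l \<epsilon> where
    ode: "\<forall>\<rho>\<in>{0<..<R_rad \<bar>\<kappa>\<bar>}.
        (L has_real_derivative L' \<rho>) (at \<rho>) \<and>
        (L' has_real_derivative L'' \<rho>) (at \<rho>) \<and>
        (sin_k \<kappa> \<rho>)\<^sup>2 * L'' \<rho> + sin_k \<kappa> \<rho> * cos_k \<kappa> \<rho> * L' \<rho>
          + ((sin_k \<kappa> \<rho>)\<^sup>2 - m\<^sup>2) * L \<rho> = 0"
    and L_lim: "(L \<longlongrightarrow> l) (at_right 0)"
    and "0 < \<epsilon>" and "\<forall>\<rho>\<in>{0<..<\<epsilon>}. 0 < L \<rho>"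
    using \<open>is_L \<kappa> m L\<close> unfolding is_L_def by blast
  interpret radial_ode "sin_k \<kappa>" L L' "\<lambda>x. m\<^sup>2 - (sin_k \<kappa> x)\<^sup>2" \<rho>2
    using radial_ode_sin_k[OF \<open>\<kappa> < 0\<close> \<open>\<rho>2 < R_rad \<bar>\<kappa>\<bar>\<close> ode] .
  interpret regular_radial_ode "sin_k \<kappa>" L L' "\<lambda>x. m\<^sup>2 - (sin_k \<kappa> x)\<^sup>2" \<rho>2 "3 / 2" l
  proof
    show "0 \<le> m\<^sup>2 - (sin_k \<kappa> x)\<^sup>2" if "0 < x" "x \<le> \<rho>2" for x
      using gap[OF that] zero_le_power2[of k] by linarith
    show "sin_k \<kappa> x \<le> 3 / 2 * x" if "0 < x" "x \<le> \<rho>2" for x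
      using sin_k_le_three_halves[OF \<open>\<kappa> < 0\<close> that(1)] that(2) \<open>\<rho>2 < R_rad \<bar>\<kappa>\<bar>\<close> by simp
    show "(L \<longlongrightarrow> l) (at_right 0)"
      by (fact L_lim)
    show "\<forall>\<^sub>F x in at_right 0. 0 < L x"
      unfolding eventually_at_right_field using \<open>0 < \<epsilon>\<close> \<open>\<forall>\<rho>\<in>{0<..<\<epsilon>}. 0 < L \<rho>\<close> by auto
  qed
  show "0 < L \<rho>1"
    using L_pos \<open>0 < \<rho>1\<close> \<open>\<rho>1 < \<rho>2\<close> by simp
  show "L \<rho>1 * cosh (k * (ln (tanh (sqrt (- \<kappa>) * \<rho>2 / 2)) - ln (tanh (sqrt (- \<kappa>) * \<rho>1 / 2))))
      \<le> L \<rho>2"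
    using \<open>0 < \<rho>1\<close> \<open>\<rho>1 < \<rho>2\<close> gap L_pos L'_nonneg
    by (intro cosh_comparison ln_tanh_half_has_real_derivative[OF \<open>\<kappa> < 0\<close>]) auto
qed

lemma sin_k_coefficient_ge:
  assumes "\<kappa> < 0" "0 < \<delta>" "\<delta> < 1" "0 < x" "x \<le> R_rad \<bar>\<kappa>\<bar>" "x < 2 * m * \<delta> / 3"
  shows "(sqrt (1 - \<delta>\<^sup>2) * m)\<^sup>2 \<le> m\<^sup>2 - (sin_k \<kappa> x)\<^sup>2"
proof -
  have "sin_k \<kappa> x \<le> m * \<delta>"
    using sin_k_le_three_halves[OF \<open>\<kappa> < 0\<close> \<open>0 < x\<close> \<open>x \<le> R_rad \<bar>\<kappa>\<bar>\<close>] \<open>x < 2 * m * \<delta> / 3\<close>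
    by simp
  then have "(sin_k \<kappa> x)\<^sup>2 \<le> (m * \<delta>)\<^sup>2"
    using sin_k_pos[OF \<open>\<kappa> < 0\<close> \<open>0 < x\<close>] by (intro power_mono) auto
  then show ?thesis
    using \<open>0 < \<delta>\<close> \<open>\<delta> < 1\<close> by (simp add: power_mult_distrib power_le_one algebra_simps)
qed

lemma ln_sin_k_ratio_le:
  assumes "\<kappa> < 0" "0 < \<rho>1" "0 < \<rho>2"
  shows "ln (\<rho>2 / (sin_k \<kappa> \<rho>2 / \<rho>2 * \<rho>1))
    \<le> ln (tanh (sqrt (- \<kappa>) * \<rho>2 / 2)) - ln (tanh (sqrt (- \<kappa>) * \<rho>1 / 2))"
proof -
  define a where "a = sqrt (- \<kappa>)"
  have "0 < a"
    using \<open>\<kappa> < 0\<close> by (simp add: a_def)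
  have "\<rho>2 / (sin_k \<kappa> \<rho>2 / \<rho>2 * \<rho>1) = (a * \<rho>2)\<^sup>2 / ((a * \<rho>1) * sinh (a * \<rho>2))"
    using \<open>0 < a\<close> assms by (simp add: sin_k_def a_def[symmetric] field_simps power2_eq_square)
  also have "\<dots> \<le> tanh (a * \<rho>2 / 2) / tanh (a * \<rho>1 / 2)"
    using \<open>0 < a\<close> assms by (intro tanh_half_ratio_ge) auto
  finally have "ln (\<rho>2 / (sin_k \<kappa> \<rho>2 / \<rho>2 * \<rho>1)) \<le> ln (tanh (a * \<rho>2 / 2) / tanh (a * \<rho>1 / 2))"
    using assms by (intro ln_mono) (simp_all add: sin_k_pos)
  also have "\<dots> = ln (tanh (a * \<rho>2 / 2)) - ln (tanh (a * \<rho>1 / 2))"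
    using \<open>0 < a\<close> assms by (simp add: ln_divide_pos)
  finally show ?thesis
    by (simp add: a_def)
qed

theorem mainTheorem5:
  fixes \<kappa> m \<delta> \<rho>1 \<rho>2 :: real and L :: "real \<Rightarrow> real"
  assumes "\<kappa> < 0" and "m > 0" and "is_L \<kappa> m L"
    and "0 < \<delta>" and "\<delta> < 1"
    and "0 < \<rho>1" and "\<rho>1 < \<rho>2" and "\<rho>2 < min (R_rad \<bar>\<kappa>\<bar>) (2 * m * \<delta> / 3)"
  shows "let \<beta> = sqrt (1 - \<delta>\<^sup>2); A = sin_k \<kappa> \<rho>2 / \<rho>2 in
    L \<rho>2 / L \<rho>1 \<ge> (1/2) * ((\<rho>2 / (A * \<rho>1)) powr (\<beta> * m) - (\<rho>2 / (A * \<rho>1)) powr (- \<beta> * m))"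
proof -
  define k where "k = sqrt (1 - \<delta>\<^sup>2) * m"
  define X where "X = \<rho>2 / (sin_k \<kappa> \<rho>2 / \<rho>2 * \<rho>1)"
  define t where "t \<rho> = ln (tanh (sqrt (- \<kappa>) * \<rho> / 2))" for \<rho>
  have "0 < L \<rho>1" and L_ge: "L \<rho>1 * cosh (k * (t \<rho>2 - t \<rho>1)) \<le> L \<rho>2"
    using is_L_ge_cosh[OF \<open>\<kappa> < 0\<close> \<open>is_L \<kappa> m L\<close> \<open>0 < \<rho>1\<close> \<open>\<rho>1 < \<rho>2\<close>, of k]
      sin_k_coefficient_ge[OF \<open>\<kappa> < 0\<close> \<open>0 < \<delta>\<close> \<open>\<delta> < 1\<close>]
      \<open>\<rho>2 < min (R_rad \<bar>\<kappa>\<bar>) (2 * m * \<delta> / 3)\<close>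
    by (auto simp: k_def t_def)
  have "0 < X"
    using \<open>0 < \<rho>1\<close> \<open>\<rho>1 < \<rho>2\<close> by (simp add: X_def sin_k_pos[OF \<open>\<kappa> < 0\<close>])
  have "ln X \<le> t \<rho>2 - t \<rho>1"
    using ln_sin_k_ratio_le[OF \<open>\<kappa> < 0\<close> \<open>0 < \<rho>1\<close>, of \<rho>2] \<open>\<rho>1 < \<rho>2\<close> \<open>0 < \<rho>1\<close>
    by (simp add: X_def t_def)
  have "0 \<le> k"
    using \<open>0 < \<delta>\<close> \<open>\<delta> < 1\<close> \<open>0 < m\<close> by (simp add: k_def power_le_one)
  have "(1/2) * (X powr k - X powr (- k)) = sinh (k * ln X)"
    using \<open>0 < X\<close> by (simp add: sinh_field_def powr_def)
  also have "\<dots> \<le> sinh (k * (t \<rho>2 - t \<rho>1))"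
    using \<open>ln X \<le> t \<rho>2 - t \<rho>1\<close> \<open>0 \<le> k\<close> by (simp add: mult_left_mono)
  also have "\<dots> \<le> cosh (k * (t \<rho>2 - t \<rho>1))"
    by (rule sinh_le_cosh_real)
  also have "\<dots> \<le> L \<rho>2 / L \<rho>1"
    using L_ge \<open>0 < L \<rho>1\<close> by (simp add: le_divide_eq mult.commute)
  finally show ?thesis
    by (simp add: Let_def X_def k_def)
qed

end
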